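(* Let $D=I\times[c-b,c+b]$ with $I$ a closed interval and $b>0$, and let $g_{[0]}=g_{[0]ij}du^i\otimes du^j$ be a Riemannian metric on $D$ (the reference state $M_{[0]}$, e.g. induced by a parametrization $\boldsymbol p_{[0]}:D\to\mathbb{E}^3$ of a surface). Let $C$ be the center curve $u^2=c$, let $s_{[0]}(u^1)=\sqrt{g_{[0]11}(u^1,c)}$ be its speed, and let $\kappa_{[0]}(u^1)$ be its geodesic curvature in $(D,g_{[0]})$. Let $\boldsymbol c_{[s]}:I\to\mathbb{R}^2$ be a solution of the ODE $$\ddot{\boldsymbol c}_{[s]}=\begin{pmatrix}\dot s_{[0]}/s_{[0]} & -\kappa_{[0]}s_{[0]}\\ \kappa_{[0]}s_{[0]} & \dot s_{[0]}/s_{[0]}\end{pmatrix}\dot{\boldsymbol c}_{[s]},\qquad \|\dot{\boldsymbol c}_{[s]}\|=s_{[0]},$$ where the dot denotes $d/du^1$, and define $\boldsymbol p_{[s]}:D\to\mathbb{R}^2$ by $$\boldsymbol p_{[s]}(u^1,u^2)=\boldsymbol c_{[s]}(u^1)+\begin{pmatrix}g_{[0]12}(u^1,c) & -\sqrt{\det_{i,j} g_{[0]ij}(u^1,c)}\\ \sqrt{\det_{i,j} g_{[0]ij}(u^1,c)} & g_{[0]12}(u^1,c)\end{pmatrix}\frac{(u^2-c)\,\dot{\boldsymbol c}_{[s]}(u^1)}{g_{[0]11}(u^1,c)},$$ and $M_{[s]}=\{\boldsymbol p_{[s]}(u^1,u^2):(u^1,u^2)\in D\}$. Then $M_{[s]}$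 satisfies: (a-1) the induced metric $g_{[s]ij}=\partial_i\boldsymbol p_{[s]}\cdot\partial_j\boldsymbol p_{[s]}$ coincides with $g_{[0]ij}$ on the center curve, i.e. $g_{[s]ij}(u^1,c)=g_{[0]ij}(u^1,c)$; (a-2) the planar curvature $\kappa_{[s]}$ of the center curve $\boldsymbol c_{[s]}(u^1)=\boldsymbol p_{[s]}(u^1,c)$ equals $\kappa_{[0]}$; (a-3) $\frac{\partial}{\partial u^2}\frac{\partial\boldsymbol p_{[s]}}{\partial u^2}=\boldsymbol 0$.
   Context: For a plane curve $\boldsymbol c$ with speed $s=\|\dot{\boldsymbol c}\|$, set $\boldsymbol e_1=\dot{\boldsymbol c}/s$ and $\boldsymbol e_2=\begin{pmatrix}0&-1\\1&0\end{pmatrix}\boldsymbol e_1$; its planar curvature $\kappa$ is defined by $\dot{\boldsymbol e}_1=s\kappa\boldsymbol e_2$. The geodesic curvature $\kappa_{[0]}$ of the center curve is taken with the sign convention given by the orientation of the coordinates $(u^1,u^2)$ (the unit normal is the one making a positively oriented orthonormal frame with the unit tangent). *)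

theory Defs
  imports "HOL-Analysis.Analysis"
begin

definition comp :: "nat \<Rightarrow> real \<times> real \<Rightarrow> real" where
  "comp k v = (if k = 1 then fst v else snd v)"

definition mat2 :: "real \<Rightarrow> real \<Rightarrow> real \<Rightarrow> real \<Rightarrow> real \<times> real \<Rightarrow> real \<times> real" where
  "mat2 a b c d v = (a * fst v + b * snd v, c * fst v + d * snd v)"

definition rot90 :: "real \<times> real \<Rightarrow> real \<times> real" where
  "rot90 v = mat2 0 (-1) 1 0 v"

definition slice :: "(real \<times> real) set \<Rightarrow> nat \<Rightarrow> real \<times> real \<Rightarrow> real set" where
  "slice D k x = (if k = 1 then {t. (t, snd x) \<in> D} else {t. (fst x, t) \<in> D})"

definition line_through :: "nat \<Rightarrow> real \<times> real \<Rightarrow> real \<Rightarrow> real \<times> real" where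
  "line_through k x t = (if k = 1 then (t, snd x) else (fst x, t))"

definition has_pd :: "(real \<times> real) set \<Rightarrow> nat \<Rightarrow> (real \<times> real \<Rightarrow> 'a::real_normed_vector)
    \<Rightarrow> real \<times> real \<Rightarrow> 'a \<Rightarrow> bool" where
  "has_pd D k f x v \<longleftrightarrow>
     ((\<lambda>t. f (line_through k x t)) has_vector_derivative v) (at (comp k x) within slice D k x)"

definition pd :: "(real \<times> real) set \<Rightarrow> nat \<Rightarrow> (real \<times> real \<Rightarrow> 'a::real_normed_vector)
    \<Rightarrow> real \<times> real \<Rightarrow> 'a" where
  "pd D k f x = vector_derivative (\<lambda>t. f (line_through k x t)) (at (comp k x) within slice D k x)"

text \<open>A metric is given by its components g i j (i, j in {1,2}).\<close>
definition mdet :: "(nat \<Rightarrow> nat \<Rightarrow> real \<times> real \<Rightarrow> real) \<Rightarrow> real \<times> real \<Rightarrow> real" where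
  "mdet g x = g 1 1 x * g 2 2 x - g 1 2 x * g 2 1 x"

definition minv :: "(nat \<Rightarrow> nat \<Rightarrow> real \<times> real \<Rightarrow> real) \<Rightarrow> nat \<Rightarrow> nat \<Rightarrow> real \<times> real \<Rightarrow> real" where
  "minv g k l x =
     (if k = 1 \<and> l = 1 then g 2 2 x / mdet g x
      else if k = 2 \<and> l = 2 then g 1 1 x / mdet g x
      else if k = 1 \<and> l = 2 then - g 1 2 x / mdet g x
      else - g 2 1 x / mdet g x)"

definition riemannian_metric_on :: "(real \<times> real) set \<Rightarrow> (nat \<Rightarrow> nat \<Rightarrow> real \<times> real \<Rightarrow> real) \<Rightarrow> bool" where
  "riemannian_metric_on D g \<longleftrightarrow>
     (\<forall>i\<in>{1,2}. \<forall>j\<in>{1,2}. g i j differentiable_on D) \<and>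
     (\<forall>x\<in>D. g 1 2 x = g 2 1 x \<and> g 1 1 x > 0 \<and> mdet g x > 0)"

definition christoffel :: "(real \<times> real) set \<Rightarrow> (nat \<Rightarrow> nat \<Rightarrow> real \<times> real \<Rightarrow> real)
    \<Rightarrow> nat \<Rightarrow> nat \<Rightarrow> nat \<Rightarrow> real \<times> real \<Rightarrow> real" where
  "christoffel D g k i j x =
     (1/2) * (\<Sum>l\<in>{1,2}. minv g k l x *
        (pd D i (g j l) x + pd D j (g i l) x - pd D l (g i j) x))"

definition gdot :: "(nat \<Rightarrow> nat \<Rightarrow> real \<times> real \<Rightarrow> real) \<Rightarrow> real \<times> real
    \<Rightarrow> real \<times> real \<Rightarrow> real \<times> real \<Rightarrow> real" where
  "gdot g x u v = (\<Sum>i\<in>{1,2}. \<Sum>j\<in>{1,2}. g i j x * comp i u * comp j v)"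

text \<open>Geodesic curvature, at parameter t, of a curve gam : I -> D in (D,g):
  kappa = g(nabla_V V, N) / g(V,V), where V is the velocity, nabla_V V the covariant
  acceleration, and N the unit normal such that (V/|V|, N) is a positively oriented
  (w.r.t. the coordinates (u1,u2)) orthonormal frame.\<close>
definition geodesic_curvature :: "(real \<times> real) set \<Rightarrow> (nat \<Rightarrow> nat \<Rightarrow> real \<times> real \<Rightarrow> real)
    \<Rightarrow> real set \<Rightarrow> (real \<Rightarrow> real \<times> real) \<Rightarrow> real \<Rightarrow> real" where
  "geodesic_curvature D g I gam t =
     (let x = gam t;
          Vf = (\<lambda>s. vector_derivative gam (at s within I));
          V = Vf t;
          W = vector_derivative Vf (at t within I);
          A = (\<lambda>k. comp k W + (\<Sum>i\<in>{1,2}. \<Sum>j\<in>{1,2}.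
                    christoffel D g k i j x * comp i V * comp j V));
          Acc = (A 1, A 2);
          N = (THE N. gdot g x N N = 1 \<and> gdot g x V N = 0 \<and>
                      fst V * snd N - snd V * fst N > 0)
      in gdot g x Acc N / gdot g x V V)"

definition planar_curvature :: "real set \<Rightarrow> (real \<Rightarrow> real \<times> real) \<Rightarrow> real \<Rightarrow> real" where
  "planar_curvature I cv t =
     (let s = (\<lambda>t. norm (vector_derivative cv (at t within I)));
          e1 = (\<lambda>t. (1 / s t) *\<^sub>R vector_derivative cv (at t within I));
          e2 = (\<lambda>t. rot90 (e1 t))
      in THE k. (e1 has_vector_derivative ((s t * k) *\<^sub>R e2 t)) (at t within I))"

end

theory Submission
  imports Defs
begin

(* With J = ((g12, -sqrt det g), (sqrt det g, g12)) at (u1, c), the map J is a rotation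
   followed by a scaling, so J c' . J c' = (g12^2 + det g) |c'|^2 = g11^2 g22 and
   c' . J c' = g12 |c'|^2 = g11 g12; hence the frame (c', J c' / g11) of partial derivatives
   of p along the center curve reproduces g.  The ODE is exactly what makes the unit tangent
   e1 = c' / s0 satisfy e1' = s0 kappa0 rot90 e1, i.e. the Frenet equation with curvature
   kappa0.  Finally p is affine in u2, so its second u2-derivative vanishes. *)

lemma mat2_scaleR: "mat2 a b c d (r *\<^sub>R v) = r *\<^sub>R mat2 a b c d v"
  by (simp add: mat2_def algebra_simps)

lemma inner_mat2_conformal_right:
  "inner v (mat2 h (- s) s h v) = h * inner v v"
  by (cases v) (simp add: mat2_def algebra_simps power2_eq_square)

lemma inner_mat2_conformal:
  "inner (mat2 h (- s) s h v) (mat2 h (- s) s h w) = (h\<^sup>2 + s\<^sup>2) * inner v w"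
  by (cases v, cases w) (simp add: mat2_def algebra_simps power2_eq_square)

lemma rot90_eq_0_iff [simp]: "rot90 v = 0 \<longleftrightarrow> v = 0"
  by (cases v) (auto simp: rot90_def mat2_def zero_prod_def)

lemma slice_Times_1: "snd x \<in> J \<Longrightarrow> slice (I \<times> J) 1 x = I"
  by (auto simp: slice_def)

lemma slice_Times_2: "fst x \<in> I \<Longrightarrow> slice (I \<times> J) 2 x = J"
  by (auto simp: slice_def)

lemma has_pd_2_affine:
  "has_pd D 2 (\<lambda>x. f (fst x) + (snd x - c) *\<^sub>R w (fst x)) x (w (fst x))"
  unfolding has_pd_def line_through_def comp_def
  by (auto intro!: derivative_eq_intros)

lemma pd_2_affine:
  fixes w :: "real \<Rightarrow> 'a::euclidean_space"
  assumes "slice D 2 x = {lo..hi}" "lo < hi" "snd x \<in> {lo..hi}"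
  shows "pd D 2 (\<lambda>x. f (fst x) + (snd x - c) *\<^sub>R w (fst x)) x = w (fst x)"
  using has_pd_2_affine[of D f c w x] assms
  unfolding pd_def has_pd_def comp_def
  by (simp add: vector_derivative_within_closed_interval)

lemma has_pd_2_pd_2_affine:
  fixes w :: "real \<Rightarrow> 'a::euclidean_space"
  assumes "x \<in> I \<times> {lo..hi}" "lo < hi"
  shows "has_pd (I \<times> {lo..hi}) 2 (pd (I \<times> {lo..hi}) 2 (\<lambda>x. f (fst x) + (snd x - c) *\<^sub>R w (fst x))) x 0"
proof -
  have "pd (I \<times> {lo..hi}) 2 (\<lambda>x. f (fst x) + (snd x - c) *\<^sub>R w (fst x)) (line_through 2 x t) = w (fst x)"
    if "t \<in> {lo..hi}" for t
    using pd_2_affine[of "I \<times> {lo..hi}" "line_through 2 x t" lo hi f c w] assms that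
    by (auto simp: line_through_def slice_Times_2)
  then show ?thesis
    using assms unfolding has_pd_def comp_def
    by (auto simp: slice_Times_2 intro: has_vector_derivative_transform[OF _ _ has_vector_derivative_const])
qed

lemma has_pd_1_affine_at_base:
  assumes "(f has_vector_derivative f') (at u within slice D 1 (u, c))"
  shows "has_pd D 1 (\<lambda>x. f (fst x) + (snd x - c) *\<^sub>R w (fst x)) (u, c) f'"
  using assms by (simp add: has_pd_def line_through_def comp_def)

lemma unit_tangent_has_vector_derivative:
  assumes dc: "(dc has_vector_derivative ddc) (at u within S)"
    and s: "(s has_real_derivative s') (at u within S)"
    and "u \<in> S" "s u > 0" "\<forall>t\<in>S. norm (dc t) = s t"
    and ode: "ddc = mat2 (s' / s u) (- k * s u) (k * s u) (s' / s u) (dc u)"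
  shows "((\<lambda>t. (1 / norm (dc t)) *\<^sub>R dc t) has_vector_derivative
           (s u * k) *\<^sub>R rot90 ((1 / s u) *\<^sub>R dc u)) (at u within S)"
proof -
  have "((\<lambda>t. inverse (s t) *\<^sub>R dc t) has_vector_derivative
          inverse (s u) *\<^sub>R ddc + (- (inverse (s u) * s' * inverse (s u))) *\<^sub>R dc u) (at u within S)"
    using \<open>s u > 0\<close> by (intro has_vector_derivative_scaleR[OF DERIV_inverse'[OF s] dc]) simp
  also have "inverse (s u) *\<^sub>R ddc + (- (inverse (s u) * s' * inverse (s u))) *\<^sub>R dc u
      = (s u * k) *\<^sub>R rot90 ((1 / s u) *\<^sub>R dc u)"
    using \<open>s u > 0\<close> unfolding ode
    by (cases "dc u") (simp add: mat2_def rot90_def field_simps)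
  finally show ?thesis
    by (rule has_vector_derivative_transform[rotated 2]) (use assms(3,5) in \<open>auto simp: divide_inverse\<close>)
qed

lemma planar_curvature_eqI:
  assumes "a0 < a1" "u \<in> {a0..a1}"
    and cv: "\<forall>t\<in>{a0..a1}. (cv has_vector_derivative dc t) (at t within {a0..a1})"
    and "dc u \<noteq> 0"
    and e1: "((\<lambda>t. (1 / norm (dc t)) *\<^sub>R dc t) has_vector_derivative
               (norm (dc u) * k) *\<^sub>R rot90 ((1 / norm (dc u)) *\<^sub>R dc u)) (at u within {a0..a1})"
  shows "planar_curvature {a0..a1} cv u = k"
proof -
  have vd: "vector_derivative cv (at t within {a0..a1}) = dc t" if "t \<in> {a0..a1}" for t
    using vector_derivative_within_closed_interval \<open>a0 < a1\<close> that cv by blast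
  let ?e1 = "\<lambda>t. (1 / norm (dc t)) *\<^sub>R dc t"
  let ?e2 = "rot90 ((1 / norm (dc u)) *\<^sub>R dc u)"
  have e1': "((\<lambda>t. (1 / norm (vector_derivative cv (at t within {a0..a1}))) *\<^sub>R
                    vector_derivative cv (at t within {a0..a1}))
               has_vector_derivative (norm (dc u) * k') *\<^sub>R ?e2) (at u within {a0..a1})
           \<longleftrightarrow> (?e1 has_vector_derivative (norm (dc u) * k') *\<^sub>R ?e2) (at u within {a0..a1})" for k'
    using \<open>u \<in> {a0..a1}\<close> vd by (intro has_vector_derivative_cong_ev) (auto simp: eventually_at_filter)
  have "(THE k'. (?e1 has_vector_derivative (norm (dc u) * k') *\<^sub>R ?e2) (at u within {a0..a1})) = k"
  proof (rule the_equality)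
    fix k' assume "(?e1 has_vector_derivative (norm (dc u) * k') *\<^sub>R ?e2) (at u within {a0..a1})"
    then have "(norm (dc u) * k') *\<^sub>R ?e2 = (norm (dc u) * k) *\<^sub>R ?e2"
      using e1 assms(1,2) by (intro vector_derivative_unique_within_closed_interval[of a0 a1 u]) auto
    moreover have "?e2 \<noteq> 0" "norm (dc u) \<noteq> 0"
      using \<open>dc u \<noteq> 0\<close> by auto
    ultimately show "k' = k" by simp
  qed (fact e1)
  then show ?thesis
    unfolding planar_curvature_def Let_def e1' vd[OF \<open>u \<in> {a0..a1}\<close>] .
qed

lemma planar_curvature_of_frenet_ode:
  assumes "a0 < a1" "u \<in> {a0..a1}"
    and cv: "\<forall>t\<in>{a0..a1}. (cv has_vector_derivative dc t) (at t within {a0..a1})"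
    and dc: "(dc has_vector_derivative ddc) (at u within {a0..a1})"
    and s: "(s has_real_derivative s') (at u within {a0..a1})" "s u > 0"
    and speed: "\<forall>t\<in>{a0..a1}. norm (dc t) = s t"
    and ode: "ddc = mat2 (vector_derivative s (at u within {a0..a1}) / s u) (- k * s u)
                        (k * s u) (vector_derivative s (at u within {a0..a1}) / s u) (dc u)"
  shows "planar_curvature {a0..a1} cv u = k"
proof -
  have "vector_derivative s (at u within {a0..a1}) = s'"
    using s(1) assms(1,2)
    by (intro vector_derivative_within_closed_interval) (auto simp: has_real_derivative_iff_has_vector_derivative)
  then have "((\<lambda>t. (1 / norm (dc t)) *\<^sub>R dc t) has_vector_derivative
               (s u * k) *\<^sub>R rot90 ((1 / s u) *\<^sub>R dc u)) (at u within {a0..a1})"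
    using assms by (intro unit_tangent_has_vector_derivative[OF dc s(1)]) auto
  moreover have "norm (dc u) = s u"
    using speed \<open>u \<in> {a0..a1}\<close> by blast
  ultimately show ?thesis
    using assms(1,2) cv \<open>s u > 0\<close> by (intro planar_curvature_eqI) auto
qed

lemma sqrt_horizontal_has_real_derivative:
  assumes "f differentiable_on D" "(\<lambda>t. (t, c)) ` S \<subseteq> D" "u \<in> S" "f (u, c) > 0"
  obtains s' where "((\<lambda>t. sqrt (f (t, c))) has_real_derivative s') (at u within S)"
proof -
  have "(f \<circ> (\<lambda>t. (t, c))) differentiable (at u within S)"
  proof (rule differentiable_chain_within)
    show "(\<lambda>t. (t, c)) differentiable (at u within S)"
      by (auto intro!: derivative_intros)
    show "f differentiable (at (u, c) within (\<lambda>t. (t, c)) ` S)"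
      using assms(1-3) by (auto simp: differentiable_on_def intro: differentiable_within_subset)
  qed
  then obtain f' where "((\<lambda>t. f (t, c)) has_real_derivative f') (at u within S)"
    by (auto simp: o_def vector_derivative_works has_real_derivative_iff_has_vector_derivative)
  from DERIV_chain2[OF DERIV_real_sqrt this] \<open>f (u, c) > 0\<close> show ?thesis
    by (intro that) simp
qed

lemma inner_conformal_frame:
  fixes v :: "real \<times> real"
  assumes "inner v v = G" "G > 0" "h\<^sup>2 + s\<^sup>2 = G * E"
  defines "w \<equiv> (1 / G) *\<^sub>R mat2 h (- s) s h v"
  shows "inner v w = h" "inner w w = E"
  using assms unfolding w_def
  by (simp_all add: inner_mat2_conformal_right inner_mat2_conformal power2_eq_square)

lemma riemannian_metric_on_frame:
  assumes "riemannian_metric_on D g" "x \<in> D" "norm v = sqrt (g 1 1 x)"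
  defines "w \<equiv> (1 / g 1 1 x) *\<^sub>R mat2 (g 1 2 x) (- sqrt (mdet g x)) (sqrt (mdet g x)) (g 1 2 x) v"
  shows "inner v v = g 1 1 x" "inner v w = g 1 2 x" "inner w v = g 2 1 x" "inner w w = g 2 2 x"
proof -
  have pos: "g 1 1 x > 0" "mdet g x > 0" and sym: "g 1 2 x = g 2 1 x"
    using assms(1,2) by (auto simp: riemannian_metric_on_def)
  show vv: "inner v v = g 1 1 x"
    using assms(3) pos(1) by (simp add: norm_eq_sqrt_inner)
  have "(g 1 2 x)\<^sup>2 + (sqrt (mdet g x))\<^sup>2 = g 1 1 x * g 2 2 x"
    using pos(2) sym by (simp add: mdet_def power2_eq_square)
  from inner_conformal_frame[OF vv pos(1) this] sym
  show "inner v w = g 1 2 x" "inner w v = g 2 1 x" "inner w w = g 2 2 x"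
    unfolding w_def by (simp_all add: inner_commute)
qed

theorem mainTheorem3:
  fixes a0 a1 c b :: real
    and g :: "nat \<Rightarrow> nat \<Rightarrow> real \<times> real \<Rightarrow> real"
    and cs dcs ddcs :: "real \<Rightarrow> real \<times> real"
    and p :: "real \<times> real \<Rightarrow> real \<times> real"
  defines "I \<equiv> {a0..a1}"
  defines "D \<equiv> I \<times> {c - b..c + b}"
  defines "s0 \<equiv> (\<lambda>u. sqrt (g 1 1 (u, c)))"
  defines "kappa0 \<equiv> (\<lambda>u. geodesic_curvature D g I (\<lambda>t. (t, c)) u)"
  assumes "a0 < a1" and "b > 0"
    and metric: "riemannian_metric_on D g"
    and d1: "\<forall>u\<in>I. (cs has_vector_derivative dcs u) (at u within I)"
    and d2: "\<forall>u\<in>I. (dcs has_vector_derivative ddcs u) (at u within I)"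
    and ode: "\<forall>u\<in>I. ddcs u =
       mat2 (vector_derivative s0 (at u within I) / s0 u) (- kappa0 u * s0 u)
            (kappa0 u * s0 u) (vector_derivative s0 (at u within I) / s0 u) (dcs u)"
    and speed: "\<forall>u\<in>I. norm (dcs u) = s0 u"
    and p_def: "\<forall>u1 u2. p (u1, u2) = cs u1 +
       mat2 (g 1 2 (u1, c)) (- sqrt (mdet g (u1, c)))
            (sqrt (mdet g (u1, c))) (g 1 2 (u1, c))
            (((u2 - c) / g 1 1 (u1, c)) *\<^sub>R dcs u1)"
  shows "(\<forall>u\<in>I. \<exists>P :: nat \<Rightarrow> real \<times> real.
              has_pd D 1 p (u, c) (P 1) \<and> has_pd D 2 p (u, c) (P 2) \<and>
              (\<forall>i\<in>{1,2}. \<forall>j\<in>{1,2}. inner (P i) (P j) = g i j (u, c)))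
       \<and> (\<forall>u\<in>I. planar_curvature I (\<lambda>t. p (t, c)) u = kappa0 u)
       \<and> (\<forall>x\<in>D. \<exists>v. has_pd D 2 p x v)
       \<and> (\<forall>x\<in>D. has_pd D 2 (pd D 2 p) x 0)"
proof -
  define W where "W u1 = (1 / g 1 1 (u1, c)) *\<^sub>R mat2 (g 1 2 (u1, c)) (- sqrt (mdet g (u1, c)))
                           (sqrt (mdet g (u1, c))) (g 1 2 (u1, c)) (dcs u1)" for u1
  have p_eq: "p = (\<lambda>x. cs (fst x) + (snd x - c) *\<^sub>R W (fst x))"
    using p_def by (auto simp: W_def mat2_scaleR)
  have center: "(\<lambda>t. p (t, c)) = cs"
    unfolding p_eq by simp
  have on_center: "(u, c) \<in> D" if "u \<in> I" for u
    using that \<open>b > 0\<close> by (simp add: D_def)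
  have pd_1: "has_pd D 1 p (u, c) (dcs u)" if "u \<in> I" for u
  proof -
    have "slice D 1 (u, c) = I"
      unfolding D_def using \<open>b > 0\<close> by (intro slice_Times_1) simp
    then show ?thesis
      unfolding p_eq using that d1 by (intro has_pd_1_affine_at_base) simp
  qed
  have pd_2: "has_pd D 2 p x (W (fst x))" for x
    unfolding p_eq by (rule has_pd_2_affine)
  have "\<exists>P. has_pd D 1 p (u, c) (P 1) \<and> has_pd D 2 p (u, c) (P 2) \<and>
            (\<forall>i\<in>{1,2}. \<forall>j\<in>{1,2}. inner (P i) (P j) = g i j (u, c))" if "u \<in> I" for u
  proof -
    have "norm (dcs u) = sqrt (g 1 1 (u, c))"
      using speed that by (simp add: s0_def)
    note frame = riemannian_metric_on_frame[OF metric on_center[OF that] this, folded W_def]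
    show ?thesis
      using frame pd_1[OF that] pd_2[of "(u, c)"]
      by (intro exI[of _ "\<lambda>i. if i = 1 then dcs u else W u"]) simp
  qed
  moreover have "planar_curvature I (\<lambda>t. p (t, c)) u = kappa0 u" if u: "u \<in> I" for u
  proof -
    have "g 1 1 differentiable_on D" "g 1 1 (u, c) > 0"
      using metric on_center[OF u] by (auto simp: riemannian_metric_on_def)
    moreover have "(\<lambda>t. (t, c)) ` I \<subseteq> D"
      using on_center by blast
    ultimately obtain s' where s': "(s0 has_real_derivative s') (at u within I)"
      unfolding s0_def using u by (blast elim: sqrt_horizontal_has_real_derivative)
    have "s0 u > 0"
      using \<open>g 1 1 (u, c) > 0\<close> by (simp add: s0_def)
    with s' u \<open>a0 < a1\<close> d1 d2[rule_format, OF u] ode[rule_format, OF u] speed show ?thesis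
      unfolding center I_def by (intro planar_curvature_of_frenet_ode) auto
  qed
  moreover have "has_pd D 2 (pd D 2 p) x 0" if "x \<in> D" for x
    using that \<open>b > 0\<close> unfolding p_eq D_def by (intro has_pd_2_pd_2_affine) auto
  ultimately show ?thesis
    using pd_2 by blast
qed

end
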